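(* Suppose $(a_i)_{i=1}^n$, $(b_i)_{i=1}^n$, $(a'_i)_{i=1}^n$, $(b'_i)_{i=1}^n$ are sequences of complex numbers and $A, B, \epsilon$ are positive real numbers with $\epsilon < \min(1/A, 1/e)$, such that $\sum_{i=1}^n |a_i| e^{|b_i|} \le B$ and for all $i$: (1) $2|a_i| e^{|b_i|+1} \le A$; (2) $|b_i - b'_i| < \epsilon$; (3) $|a_i - a'_i| < \epsilon |a_i|$. Then $$\Big\| \prod_{i=1}^n Y(b_i) X(a_i) Y(-b_i) - \prod_{i=1}^n Y(b'_i) X(a'_i) Y(-b'_i) \Big\| \le 12\, e^{A+2B} B \epsilon.$$
   Context: For a matrix $U \in \mathfrak{sl}_2(\mathbb{C})$ and $t\in\mathbb{C}$, $U(t)$ denotes $\exp(tU)\in\mathrm{SL}_2(\mathbb{C})$. Let $X = \begin{pmatrix} 1/2 & 0 \\ 0 & -1/2 \end{pmatrix}$, $\theta = \begin{pmatrix} 0 & -1/2 \\ 1/2 & 0\end{pmatrix}$, and $Y = e^{(\pi/2)\mathrm{ad}_\theta} X = \theta(\pi/2) X \theta(-\pi/2)$. All matrices are regarded as elements of $M_2(\mathbb{C})$, and $\|\cdot\|$ is the operator norm with respect to the standard Hermitian ($L^2$) norm on $\mathbb{C}^2$. *)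

theory Defs
  imports "HOL-Analysis.Analysis"
begin

type_synonym cmat = "complex^2^2"

fun mpow :: "cmat \<Rightarrow> nat \<Rightarrow> cmat" where
  "mpow U 0 = mat 1"
| "mpow U (Suc k) = U ** mpow U k"

definition mexp :: "cmat \<Rightarrow> cmat" where
  "mexp U = (\<Sum>k. inverse (fact k) *\<^sub>R mpow U k)"

definition csmul :: "complex \<Rightarrow> cmat \<Rightarrow> cmat" where
  "csmul c U = (\<chi> i j. c * U$i$j)"

definition mflow :: "cmat \<Rightarrow> complex \<Rightarrow> cmat" where
  "mflow U t = mexp (csmul t U)"

definition Xm :: cmat where
  "Xm = (\<chi> i j. if i = 1 \<and> j = 1 then 1/2 else if i = 2 \<and> j = 2 then -1/2 else 0)"

definition thetam :: cmat where
  "thetam = (\<chi> i j. if i = 1 \<and> j = 2 then -1/2 else if i = 2 \<and> j = 1 then 1/2 else 0)"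

definition Ym :: cmat where
  "Ym = mflow thetam (of_real (pi/2)) ** Xm ** mflow thetam (of_real (-pi/2))"

text \<open>Operator norm w.r.t. the standard Hermitian (L2) norm on C^2.\<close>
definition opnorm :: "cmat \<Rightarrow> real" where
  "opnorm M = onorm (\<lambda>x. M *v x)"

definition oprod :: "(nat \<Rightarrow> cmat) \<Rightarrow> nat \<Rightarrow> cmat" where
  "oprod f n = foldr (\<lambda>i M. f i ** M) [1..<n+1] (mat 1)"

end

(* Explicitly Y = [[0, 1/2], [1/2, 0]], and Z(b) = 2 Y(b) X Y(-b) = [[cosh b, -sinh b], [sinh b, -cosh b]]
   is an involution, so each factor Y(b) X(a) Y(-b) = exp((a/2) Z(b)) equals cosh(a/2) I + sinh(a/2) Z(b).
   From these entries, every factor has operator norm at most exp(2 |a| e^|b|), also after the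
   perturbation (a, b) -> (a', b') since eps < 1/e < 1/2, and the factors for (a, b) and (a', b') differ
   by at most 5 eps |a| e^|b| e^|a| <= 5 eps e^A |a| e^|b|. Telescoping the difference of the two
   ordered products then bounds it by e^(2B) * 5 eps e^A B. *)

theory Submission
  imports Defs
begin

section \<open>Estimates for exp, cosh and sinh\<close>

lemma norm_exp_minus_one_le:
  fixes w :: "'a::{banach, real_normed_algebra_1}"
  shows "norm (exp w - 1) \<le> exp (norm w) - 1"
proof -
  let ?f = "\<lambda>n. w ^ n /\<^sub>R fact n - (if n = 0 then 1 else 0)"
  let ?g = "\<lambda>n. norm w ^ n /\<^sub>R fact n - (if n = 0 then 1 else 0)"
  have f: "?f sums (exp w - 1)" and g: "?g sums (exp (norm w) - 1)"
    by (intro sums_diff exp_converges sums_single[of 0 "\<lambda>_. 1", simplified])+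
  have "norm (?f n) \<le> ?g n" for n
    by (simp add: norm_power_ineq divide_right_mono)
  then have "norm (suminf ?f) \<le> suminf ?g"
    using g by (intro norm_suminf_le) (auto simp: sums_iff)
  then show ?thesis
    using f g by (simp add: sums_iff)
qed

lemma exp_minus_one_le_mult_exp: "exp x - 1 \<le> x * exp (x::real)" if "0 \<le> x"
proof -
  have "(1 - x) * exp x \<le> exp (-x) * exp x"
    using exp_ge_add_one_self[of "-x"] by (intro mult_right_mono) simp_all
  then show ?thesis
    by (simp add: algebra_simps flip: exp_add)
qed

lemma norm_exp_diff_le:
  fixes u v :: "'a::{banach, real_normed_field}"
  shows "norm (exp u - exp v) \<le> norm (u - v) * exp (norm (u - v) + norm v)"
proof -
  have "exp u - exp v = exp v * (exp (u - v) - 1)"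
    by (simp add: algebra_simps flip: exp_add)
  then have "norm (exp u - exp v) = norm (exp v) * norm (exp (u - v) - 1)"
    by (simp add: norm_mult)
  also have "\<dots> \<le> exp (norm v) * (norm (u - v) * exp (norm (u - v)))"
    using norm_exp_minus_one_le[of "u - v"] exp_minus_one_le_mult_exp[of "norm (u - v)"]
    by (intro mult_mono norm_exp) simp_all
  finally show ?thesis
    by (simp add: exp_add mult_ac)
qed

lemma norm_cosh_diff_le:
  fixes u v :: "'a::{banach, real_normed_field}"
  shows "norm (cosh u - cosh v) \<le> norm (u - v) * exp (norm (u - v) + norm v)"
proof -
  have eq: "cosh u - cosh v = ((exp u - exp v) + (exp (-u) - exp (-v))) / 2"
    by (simp add: cosh_field_def field_simps)
  have "norm (cosh u - cosh v) = norm ((exp u - exp v) + (exp (-u) - exp (-v))) / 2"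
    unfolding eq by (simp add: norm_divide)
  also have "\<dots> \<le> (norm (exp u - exp v) + norm (exp (-u) - exp (-v))) / 2"
    by (intro divide_right_mono norm_triangle_ineq) simp
  also have "\<dots> \<le> norm (u - v) * exp (norm (u - v) + norm v)"
    using norm_exp_diff_le[of u v] norm_exp_diff_le[of "-u" "-v"]
    by (simp add: norm_minus_commute[of u v])
  finally show ?thesis .
qed

lemma norm_sinh_diff_le:
  fixes u v :: "'a::{banach, real_normed_field}"
  shows "norm (sinh u - sinh v) \<le> norm (u - v) * exp (norm (u - v) + norm v)"
proof -
  have eq: "sinh u - sinh v = ((exp u - exp v) - (exp (-u) - exp (-v))) / 2"
    by (simp add: sinh_field_def field_simps)
  have "norm (sinh u - sinh v) = norm ((exp u - exp v) - (exp (-u) - exp (-v))) / 2"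
    unfolding eq by (simp add: norm_divide)
  also have "\<dots> \<le> (norm (exp u - exp v) + norm (exp (-u) - exp (-v))) / 2"
    by (intro divide_right_mono norm_triangle_ineq4) simp
  also have "\<dots> \<le> norm (u - v) * exp (norm (u - v) + norm v)"
    using norm_exp_diff_le[of u v] norm_exp_diff_le[of "-u" "-v"]
    by (simp add: norm_minus_commute[of u v])
  finally show ?thesis .
qed

lemma norm_sinh_le:
  fixes w :: "'a::{banach, real_normed_algebra_1}"
  shows "norm (sinh w) \<le> sinh (norm w)"
proof -
  have "norm (\<Sum>n. if even n then 0 else w ^ n /\<^sub>R fact n)
      \<le> (\<Sum>n. if even n then 0 else norm w ^ n /\<^sub>R fact n)"
    using sinh_converges[of "norm w"]
    by (intro norm_suminf_le) (auto simp: sums_iff norm_power_ineq divide_right_mono)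
  then show ?thesis
    using sinh_converges[of w] sinh_converges[of "norm w"] by (simp add: sums_iff)
qed

lemma norm_cosh_le:
  fixes w :: "'a::{banach, real_normed_algebra_1}"
  shows "norm (cosh w) \<le> cosh (norm w)"
proof -
  have "norm (\<Sum>n. if even n then w ^ n /\<^sub>R fact n else 0)
      \<le> (\<Sum>n. if even n then norm w ^ n /\<^sub>R fact n else 0)"
    using cosh_converges[of "norm w"]
    by (intro norm_suminf_le) (auto simp: sums_iff norm_power_ineq divide_right_mono)
  then show ?thesis
    using cosh_converges[of w] cosh_converges[of "norm w"] by (simp add: sums_iff)
qed

lemma sinh_le_mult_exp: "sinh y \<le> y * exp (y::real)" if "0 \<le> y"
proof -
  have "(1 - 2 * y) * exp y \<le> exp (-(2 * y)) * exp y"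
    using exp_ge_add_one_self[of "-(2 * y)"] by (intro mult_right_mono) simp_all
  also have "exp (-(2 * y)) * exp y = exp (-y)"
    by (simp flip: exp_add)
  finally show ?thesis
    by (simp add: sinh_def algebra_simps)
qed

lemma cosh_plus_mult_sinh_le_exp: "cosh y + z * sinh y \<le> exp (z * y)"
  if "0 \<le> y" "1 \<le> (z::real)"
proof -
  have "cosh y + z * sinh y = exp y + (z - 1) * sinh y"
    by (simp add: algebra_simps flip: cosh_plus_sinh)
  also have "\<dots> \<le> exp y + (z - 1) * (y * exp y)"
    using sinh_le_mult_exp[OF \<open>0 \<le> y\<close>] \<open>1 \<le> z\<close> by (intro add_left_mono mult_left_mono) simp_all
  also have "\<dots> = exp y * (1 + (z - 1) * y)"
    by (simp add: algebra_simps)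
  also have "\<dots> \<le> exp y * exp ((z - 1) * y)"
    by (intro mult_left_mono exp_ge_add_one_self) simp
  also have "\<dots> = exp (z * y)"
    by (simp add: algebra_simps flip: exp_add)
  finally show ?thesis .
qed

lemma cosh_sq_plus_sinh_sq_le: "(cosh y)\<^sup>2 + (sinh y)\<^sup>2 \<le> (exp (y::real))\<^sup>2" if "0 \<le> y"
proof -
  have "(cosh y)\<^sup>2 + (sinh y)\<^sup>2 = cosh (2 * y)"
    by (rule cosh_double[symmetric])
  also have "\<dots> \<le> exp (2 * y)"
    using that by (simp flip: cosh_plus_sinh)
  finally show ?thesis
    by (simp add: power2_eq_square flip: exp_add)
qed

section \<open>2 x 2 matrices and the operator norm\<close>

definition mat2 :: "complex \<Rightarrow> complex \<Rightarrow> complex \<Rightarrow> complex \<Rightarrow> cmat" where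
  "mat2 p q r s = (\<chi> i j. if i = 1 then (if j = 1 then p else q) else (if j = 1 then r else s))"

lemma mat2_eq_iff: "mat2 p q r s = mat2 p2 q2 r2 s2 \<longleftrightarrow> p = p2 \<and> q = q2 \<and> r = r2 \<and> s = s2"
  by (simp add: mat2_def vec_eq_iff forall_2)

lemma mat2_mult:
  "mat2 p q r s ** mat2 p2 q2 r2 s2 = mat2 (p * p2 + q * r2) (p * q2 + q * s2) (r * p2 + s * r2) (r * q2 + s * s2)"
  by (simp add: mat2_def vec_eq_iff forall_2 matrix_matrix_mult_def sum_2)

lemma mat2_add: "mat2 p q r s + mat2 p2 q2 r2 s2 = mat2 (p + p2) (q + q2) (r + r2) (s + s2)"
  by (simp add: mat2_def vec_eq_iff forall_2)

lemma mat2_diff: "mat2 p q r s - mat2 p2 q2 r2 s2 = mat2 (p - p2) (q - q2) (r - r2) (s - s2)"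
  by (simp add: mat2_def vec_eq_iff forall_2)

lemma csmul_mat2: "csmul c (mat2 p q r s) = mat2 (c * p) (c * q) (c * r) (c * s)"
  by (simp add: mat2_def csmul_def vec_eq_iff forall_2)

lemma mat_1_eq_mat2: "(mat 1 :: cmat) = mat2 1 0 0 1"
  by (simp add: mat2_def mat_def vec_eq_iff forall_2)

lemma Xm_eq_mat2: "Xm = mat2 (1/2) 0 0 (-1/2)"
  by (simp add: mat2_def Xm_def vec_eq_iff forall_2)

lemma thetam_eq_mat2: "thetam = mat2 0 (-1/2) (1/2) 0"
  by (simp add: mat2_def thetam_def vec_eq_iff forall_2)

lemma norm_mat2: "norm (mat2 p q r s) = sqrt ((cmod p)\<^sup>2 + (cmod q)\<^sup>2 + (cmod r)\<^sup>2 + (cmod s)\<^sup>2)"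
  by (simp add: mat2_def norm_vec_def L2_set_def sum_2 add.assoc)

lemma matrix_diff_ldistrib: "(A::'a::ring_1^'n^'m) ** (B - C) = A ** B - A ** C"
  by (simp add: vec_eq_iff matrix_matrix_mult_def sum_subtractf right_diff_distrib)

lemma matrix_diff_rdistrib: "((A::'a::ring_1^'n^'m) - B) ** C = A ** C - B ** C"
  by (simp add: vec_eq_iff matrix_matrix_mult_def sum_subtractf left_diff_distrib)

lemma norm_matrix_vector_mult_le:
  fixes M :: "'a::real_normed_field^'n^'m"
  shows "norm (M *v x) \<le> norm M * norm x"
proof -
  have row: "norm ((M *v x) $ i) \<le> norm (M $ i) * norm x" for i
  proof -
    have "norm ((M *v x) $ i) \<le> (\<Sum>j\<in>UNIV. norm (M $ i $ j * x $ j))"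
      unfolding matrix_vector_mult_def by (simp add: norm_sum)
    also have "\<dots> = (\<Sum>j\<in>UNIV. \<bar>norm (M $ i $ j)\<bar> * \<bar>norm (x $ j)\<bar>)"
      by (simp add: norm_mult)
    also have "\<dots> \<le> norm (M $ i) * norm x"
      unfolding norm_vec_def by (rule L2_set_mult_ineq)
    finally show ?thesis .
  qed
  have "norm (M *v x) \<le> L2_set (\<lambda>i. norm (M $ i) * norm x) UNIV"
    unfolding norm_vec_def[of "M *v x"] by (rule L2_set_mono) (use row in auto)
  also have "\<dots> = norm M * norm x"
    by (simp add: norm_vec_def[of M] L2_set_left_distrib)
  finally show ?thesis .
qed

lemma opnorm_nonneg: "0 \<le> opnorm M"
  unfolding opnorm_def by (rule onorm_pos_le[OF matrix_vector_mul_bounded_linear])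

lemma opnorm_zero: "opnorm 0 = 0"
proof -
  have "(\<lambda>x. (0::cmat) *v x) = (\<lambda>x. 0)"
    by (rule ext) simp
  then show ?thesis
    unfolding opnorm_def by (metis onorm_zero)
qed

lemma opnorm_le_norm: "opnorm M \<le> norm M"
  unfolding opnorm_def
  by (rule onorm_le) (simp add: norm_matrix_vector_mult_le)

lemma opnorm_mult: "opnorm (M ** N) \<le> opnorm M * opnorm N"
proof -
  have "(\<lambda>x. (M ** N) *v x) = (\<lambda>x. M *v x) \<circ> (\<lambda>x. N *v x)"
    by (simp add: o_def matrix_vector_mul_assoc)
  then show ?thesis
    unfolding opnorm_def
    using onorm_compose[OF matrix_vector_mul_bounded_linear matrix_vector_mul_bounded_linear] by metis
qed

lemma opnorm_add: "opnorm (M + N) \<le> opnorm M + opnorm N"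
proof -
  have "(\<lambda>x. (M + N) *v x) = (\<lambda>x. M *v x + N *v x)"
    by (simp add: matrix_vector_mult_add_rdistrib)
  then show ?thesis
    unfolding opnorm_def
    using onorm_triangle[OF matrix_vector_mul_bounded_linear matrix_vector_mul_bounded_linear] by metis
qed

lemma opnorm_mat_1: "opnorm (mat 1) \<le> 1"
  unfolding opnorm_def by (rule onorm_le) simp

lemma opnorm_csmul: "opnorm (csmul c M) \<le> cmod c * opnorm M"
  unfolding opnorm_def
proof (rule onorm_le)
  fix x
  have "csmul c M *v x = (\<chi> i. c * (M *v x) $ i)"
    by (simp add: vec_eq_iff matrix_vector_mult_def csmul_def sum_distrib_left mult.assoc)
  then have "norm (csmul c M *v x) = cmod c * norm (M *v x)"
    by (simp add: norm_vec_def norm_mult L2_set_right_distrib)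
  also have "\<dots> \<le> cmod c * (onorm ((*v) M) * norm x)"
    by (simp add: mult_left_mono onorm[OF matrix_vector_mul_bounded_linear])
  finally show "norm (csmul c M *v x) \<le> cmod c * onorm ((*v) M) * norm x"
    by (simp add: mult.assoc)
qed

lemma opnorm_csmul_le_norm: "opnorm (csmul c M) \<le> cmod c * norm M"
  using opnorm_csmul[of c M] opnorm_le_norm[of M] by (meson mult_left_mono norm_ge_zero order_trans)

lemma opnorm_csmul_mat_1: "opnorm (csmul c (mat 1)) \<le> cmod c"
  using opnorm_csmul[of c "mat 1"] opnorm_mat_1 by (meson mult_left_le norm_ge_zero order_trans)

section \<open>Exponentials of involutions\<close>

lemma csmul_mult_left: "csmul c M ** N = csmul c (M ** N)"
  by (simp add: vec_eq_iff matrix_matrix_mult_def csmul_def sum_distrib_left mult.assoc)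

lemma csmul_mult_right: "M ** csmul c N = csmul c (M ** N)"
  by (simp add: vec_eq_iff matrix_matrix_mult_def csmul_def sum_distrib_left mult.left_commute)

lemma csmul_csmul: "csmul c (csmul d M) = csmul (c * d) M"
  by (simp add: vec_eq_iff csmul_def mult.assoc)

lemma csmul_zero_left: "csmul 0 M = 0"
  by (simp add: vec_eq_iff csmul_def)

lemma scaleR_csmul: "r *\<^sub>R csmul c M = csmul (r *\<^sub>R c) M"
  by (simp add: vec_eq_iff csmul_def mult_scaleR_left)

lemma sums_csmul: "f sums L \<Longrightarrow> (\<lambda>k. csmul (f k) M) sums csmul L M"
proof -
  have "(\<Sum>k<n. csmul (f k) M) = csmul (\<Sum>k<n. f k) M" for n
    by (simp add: vec_eq_iff csmul_def sum_distrib_right)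
  moreover assume "f sums L"
  then have "((\<lambda>n. csmul (\<Sum>k<n. f k) M) \<longlongrightarrow> csmul L M) sequentially"
    unfolding sums_def csmul_def by (intro tendsto_vec_lambda tendsto_mult_right)
  ultimately show ?thesis
    unfolding sums_def by simp
qed

lemma mpow_csmul_involution:
  assumes "W ** W = mat 1"
  shows "mpow (csmul s W) k = csmul (s ^ k) (if even k then mat 1 else W)"
proof (induction k)
  case 0
  show ?case by (simp add: vec_eq_iff csmul_def mat_def)
next
  case (Suc k)
  then show ?case
    by (simp add: csmul_mult_left csmul_mult_right csmul_csmul assms mult.commute)
qed

lemma mexp_csmul_involution:
  assumes "W ** W = mat 1"
  shows "mexp (csmul s W) = csmul (cosh s) (mat 1) + csmul (sinh s) W"
proof -
  have "(\<lambda>k. csmul (if even k then s ^ k /\<^sub>R fact k else 0) (mat 1)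
          + csmul (if even k then 0 else s ^ k /\<^sub>R fact k) W)
        sums (csmul (cosh s) (mat 1) + csmul (sinh s) W)"
    by (intro sums_add sums_csmul cosh_converges sinh_converges)
  moreover have "inverse (fact k) *\<^sub>R mpow (csmul s W) k
      = csmul (if even k then s ^ k /\<^sub>R fact k else 0) (mat 1)
        + csmul (if even k then 0 else s ^ k /\<^sub>R fact k) W" for k
    by (simp add: mpow_csmul_involution[OF assms] scaleR_csmul csmul_zero_left)
  ultimately show ?thesis
    unfolding mexp_def by (simp add: sums_iff)
qed

lemma mflow_Xm: "mflow Xm t = mat2 (cosh (t/2) + sinh (t/2)) 0 0 (cosh (t/2) - sinh (t/2))"
proof -
  have W: "mat2 1 0 0 (-1) ** mat2 1 0 0 (-1) = mat 1"
    by (simp add: mat2_mult mat_1_eq_mat2)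
  have tX: "csmul t Xm = csmul (t/2) (mat2 1 0 0 (-1))"
    by (simp add: Xm_eq_mat2 csmul_mat2)
  show ?thesis
    unfolding mflow_def tX mexp_csmul_involution[OF W]
    by (simp add: mat_1_eq_mat2 csmul_mat2 mat2_add)
qed

lemma mflow_thetam:
  "mflow thetam (of_real t) = mat2 (cos (t/2)) (- sin (t/2)) (sin (t/2)) (cos (t/2))"
proof -
  have W: "mat2 0 (-\<i>) \<i> 0 ** mat2 0 (-\<i>) \<i> 0 = mat 1"
    by (simp add: mat2_mult mat_1_eq_mat2)
  have t\<theta>: "csmul (of_real t) thetam = csmul (-(\<i> * of_real (t/2))) (mat2 0 (-\<i>) \<i> 0)"
    by (simp add: thetam_eq_mat2 csmul_mat2 mat2_eq_iff algebra_simps)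
  have "cos (complex_of_real t / 2) = of_real (cos (t/2))" "sin (complex_of_real t / 2) = of_real (sin (t/2))"
    by (simp_all flip: cos_of_real sin_of_real)
  then show ?thesis
    unfolding mflow_def t\<theta> mexp_csmul_involution[OF W]
    by (simp add: mat_1_eq_mat2 csmul_mat2 mat2_add mat2_eq_iff cosh_conv_cos sinh_conv_sin algebra_simps)
qed

lemma Ym_eq_mat2: "Ym = mat2 0 (1/2) (1/2) 0"
proof -
  define c where "c = complex_of_real (sqrt 2 / 2)"
  have cc: "c * c = 1/2"
    unfolding c_def by (simp flip: of_real_mult)
  have "mflow thetam (of_real (pi/2)) = mat2 c (- c) c c"
    using mflow_thetam[of "pi/2"] by (simp add: c_def cos_45 sin_45)
  moreover have "mflow thetam (of_real (-pi/2)) = mat2 c c (- c) c"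
    using mflow_thetam[of "-pi/2"] by (simp add: c_def cos_45 sin_45)
  ultimately show ?thesis
    unfolding Ym_def Xm_eq_mat2 by (simp add: mat2_mult mat2_eq_iff algebra_simps cc)
qed

lemma mflow_Ym: "mflow Ym t = mat2 (cosh (t/2)) (sinh (t/2)) (sinh (t/2)) (cosh (t/2))"
proof -
  have W: "mat2 0 1 1 0 ** mat2 0 1 1 0 = mat 1"
    by (simp add: mat2_mult mat_1_eq_mat2)
  have tY: "csmul t Ym = csmul (t/2) (mat2 0 1 1 0)"
    by (simp add: Ym_eq_mat2 csmul_mat2)
  show ?thesis
    unfolding mflow_def tY mexp_csmul_involution[OF W]
    by (simp add: mat_1_eq_mat2 csmul_mat2 mat2_add)
qed

section \<open>The conjugated flows\<close>

definition Zm :: "complex \<Rightarrow> cmat" where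
  "Zm b = mat2 (cosh b) (- sinh b) (sinh b) (- cosh b)"

definition Xconj :: "complex \<Rightarrow> complex \<Rightarrow> cmat" where
  "Xconj a b = mflow Ym b ** mflow Xm a ** mflow Ym (- b)"

lemma Xconj_eq: "Xconj a b = csmul (cosh (a/2)) (mat 1) + csmul (sinh (a/2)) (Zm b)"
proof -
  define C S where "C = cosh (b/2)" and "S = sinh (b/2)"
  have "cosh b = C\<^sup>2 + S\<^sup>2" "sinh b = 2 * S * C"
    using cosh_double[of "b/2"] sinh_double[of "b/2"] by (simp_all add: C_def S_def)
  moreover have "C\<^sup>2 - S\<^sup>2 = 1"
    unfolding C_def S_def by (rule hyperbolic_pythagoras)
  ultimately show ?thesis
    unfolding Xconj_def mflow_Ym mflow_Xm Zm_def
    by (simp add: mat_1_eq_mat2 csmul_mat2 mat2_add mat2_mult mat2_eq_iff flip: C_def S_def) algebra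
qed

lemma norm_Zm_le: "norm (Zm b) \<le> sqrt 2 * exp (cmod b)"
proof -
  have "(cmod (cosh b))\<^sup>2 + (cmod (sinh b))\<^sup>2 \<le> (cosh (cmod b))\<^sup>2 + (sinh (cmod b))\<^sup>2"
    by (intro add_mono power_mono norm_cosh_le norm_sinh_le) simp_all
  also have "\<dots> \<le> (exp (cmod b))\<^sup>2"
    by (simp add: cosh_sq_plus_sinh_sq_le)
  finally have "norm (Zm b) \<le> sqrt (2 * (exp (cmod b))\<^sup>2)"
    by (simp add: Zm_def norm_mat2)
  then show ?thesis
    by (simp add: real_sqrt_mult)
qed

lemma norm_Zm_diff_le: "norm (Zm u - Zm v) \<le> 2 * (cmod (u - v) * exp (cmod (u - v) + cmod v))"
proof -
  let ?d = "cmod (u - v) * exp (cmod (u - v) + cmod v)"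
  have "(cmod (cosh u - cosh v))\<^sup>2 + (cmod (sinh u - sinh v))\<^sup>2 \<le> ?d\<^sup>2 + ?d\<^sup>2"
    by (intro add_mono power_mono norm_cosh_diff_le norm_sinh_diff_le) simp_all
  then have "norm (Zm u - Zm v) \<le> sqrt ((2 * ?d)\<^sup>2)"
    by (simp add: Zm_def mat2_diff norm_mat2 norm_minus_commute[of "cosh v"]
        norm_minus_commute[of "sinh v"] power_mult_distrib)
  then show ?thesis
    by (simp add: real_sqrt_mult)
qed

lemma opnorm_Xconj_le: "opnorm (Xconj a b) \<le> exp (sqrt 2 / 2 * (cmod a * exp (cmod b)))"
proof -
  let ?y = "cmod a / 2" and ?z = "sqrt 2 * exp (cmod b)"
  have "1 \<le> ?z"
    using mult_mono[of 1 "sqrt 2" 1 "exp (cmod b)"] by simp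
  have "opnorm (Xconj a b) \<le> cmod (cosh (a/2)) + cmod (sinh (a/2)) * norm (Zm b)"
    unfolding Xconj_eq by (intro order_trans[OF opnorm_add] add_mono opnorm_csmul_mat_1 opnorm_csmul_le_norm)
  also have "\<dots> \<le> cosh ?y + sinh ?y * ?z"
    using norm_cosh_le[of "a/2"] norm_sinh_le[of "a/2"] norm_Zm_le[of b]
    by (intro add_mono mult_mono) (simp_all add: norm_divide)
  also have "\<dots> \<le> exp (?z * ?y)"
    using cosh_plus_mult_sinh_le_exp[of ?y ?z] \<open>1 \<le> ?z\<close> by (simp add: mult.commute)
  finally show ?thesis
    by (simp add: mult_ac)
qed

lemma opnorm_Xconj_diff_le_terms:
  "opnorm (Xconj a b - Xconj a' b')
    \<le> cmod (cosh (a/2) - cosh (a'/2)) + cmod (sinh (a/2)) * norm (Zm b - Zm b')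
      + cmod (sinh (a/2) - sinh (a'/2)) * norm (Zm b')"
proof -
  let ?I = "csmul (cosh (a/2) - cosh (a'/2)) (mat 1)" and ?Z = "csmul (sinh (a/2)) (Zm b - Zm b')"
    and ?Z' = "csmul (sinh (a/2) - sinh (a'/2)) (Zm b')"
  have "Xconj a b - Xconj a' b' = ?I + ?Z + ?Z'"
    unfolding Xconj_eq Zm_def mat_1_eq_mat2 csmul_mat2 mat2_add mat2_diff
    by (simp add: mat2_eq_iff algebra_simps)
  then have "opnorm (Xconj a b - Xconj a' b') \<le> opnorm (?I + ?Z) + opnorm ?Z'"
    by (simp add: opnorm_add)
  also have "\<dots> \<le> opnorm ?I + opnorm ?Z + opnorm ?Z'"
    by (intro add_right_mono opnorm_add)
  also have "\<dots> \<le> cmod (cosh (a/2) - cosh (a'/2)) + cmod (sinh (a/2)) * norm (Zm b - Zm b')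
      + cmod (sinh (a/2) - sinh (a'/2)) * norm (Zm b')"
    by (intro add_mono opnorm_csmul_mat_1 opnorm_csmul_le_norm)
  finally show ?thesis .
qed

lemma norm_half_hyperbolic_diff_le:
  assumes "cmod (a - a') \<le> \<epsilon> * cmod a" and "0 \<le> \<epsilon>" and "\<epsilon> \<le> 1"
  shows "cmod (cosh (a/2) - cosh (a'/2)) \<le> \<epsilon> * cmod a / 2 * exp (cmod a)"
    and "cmod (sinh (a/2) - sinh (a'/2)) \<le> \<epsilon> * cmod a / 2 * exp (cmod a)"
proof -
  have da: "cmod (a'/2 - a/2) \<le> \<epsilon> * cmod a / 2"
    using assms(1) by (simp add: norm_minus_commute norm_divide flip: diff_divide_distrib)
  have "\<epsilon> * cmod a \<le> cmod a"
    using assms(2,3) by (intro mult_left_le_one_le) simp_all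
  then have "exp (cmod (a'/2 - a/2) + cmod (a/2)) \<le> exp (cmod a)"
    using da by (simp add: norm_divide)
  then have bound: "cmod (a'/2 - a/2) * exp (cmod (a'/2 - a/2) + cmod (a/2)) \<le> \<epsilon> * cmod a / 2 * exp (cmod a)"
    using da assms(2) by (intro mult_mono) simp_all
  show "cmod (cosh (a/2) - cosh (a'/2)) \<le> \<epsilon> * cmod a / 2 * exp (cmod a)"
    using norm_cosh_diff_le[of "a'/2" "a/2"] bound norm_minus_commute[of "cosh (a/2)" "cosh (a'/2)"] by linarith
  show "cmod (sinh (a/2) - sinh (a'/2)) \<le> \<epsilon> * cmod a / 2 * exp (cmod a)"
    using norm_sinh_diff_le[of "a'/2" "a/2"] bound norm_minus_commute[of "sinh (a/2)" "sinh (a'/2)"] by linarith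
qed

lemma norm_Zm_perturbed_le:
  assumes "cmod (b - b') \<le> \<epsilon>" and "\<epsilon> \<le> 1/2"
  shows "norm (Zm b - Zm b') \<le> 4 * \<epsilon> * exp (cmod b)" and "norm (Zm b') \<le> 4 * exp (cmod b)"
proof -
  have "exp (cmod (b' - b) + cmod b) \<le> exp (1/2) * exp (cmod b)"
    using assms by (simp add: norm_minus_commute flip: exp_add)
  also have "\<dots> \<le> 2 * exp (cmod b)"
    using exp_half_le2 by (intro mult_right_mono) simp_all
  finally have eb: "exp (cmod (b' - b) + cmod b) \<le> 2 * exp (cmod b)" .
  have "norm (Zm b - Zm b') \<le> 2 * (cmod (b' - b) * exp (cmod (b' - b) + cmod b))"
    using norm_Zm_diff_le[of b' b] norm_minus_commute[of "Zm b" "Zm b'"] by linarith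
  also have "\<dots> \<le> 2 * (\<epsilon> * (2 * exp (cmod b)))"
    using assms(1) order_trans[OF norm_ge_zero assms(1)]
    by (intro mult_left_mono mult_mono eb) (simp_all add: norm_minus_commute)
  finally show "norm (Zm b - Zm b') \<le> 4 * \<epsilon> * exp (cmod b)"
    by simp
  have "exp (cmod b') \<le> 2 * exp (cmod b)"
    using eb norm_triangle_ineq2[of b' b] by (simp add: order_trans[rotated])
  moreover have "sqrt 2 \<le> (2::real)"
    by (rule real_le_lsqrt) simp_all
  ultimately show "norm (Zm b') \<le> 4 * exp (cmod b)"
    using norm_Zm_le[of b'] mult_mono[of "sqrt 2" 2 "exp (cmod b')" "2 * exp (cmod b)"] by simp
qed

lemma opnorm_Xconj_diff_le:
  assumes "cmod (a - a') \<le> \<epsilon> * cmod a" and "cmod (b - b') \<le> \<epsilon>" and "0 \<le> \<epsilon>" and "\<epsilon> \<le> 1/2"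
  shows "opnorm (Xconj a b - Xconj a' b') \<le> 5 * \<epsilon> * (cmod a * exp (cmod b)) * exp (cmod a)"
proof -
  define E F where "E = exp (cmod a)" and "F = exp (cmod b)"
  have "1 \<le> F" "0 \<le> E"
    by (simp_all add: E_def F_def)
  have "cmod (sinh (a/2)) \<le> cmod a / 2 * exp (cmod a / 2)"
    using norm_sinh_le[of "a/2"] sinh_le_mult_exp[of "cmod a / 2"] by (simp add: norm_divide)
  also have "\<dots> \<le> cmod a / 2 * E"
    by (simp add: E_def mult_left_mono)
  finally have sh: "cmod (sinh (a/2)) \<le> cmod a / 2 * E" .
  have "opnorm (Xconj a b - Xconj a' b')
      \<le> \<epsilon> * cmod a / 2 * E + cmod a / 2 * E * (4 * \<epsilon> * F) + \<epsilon> * cmod a / 2 * E * (4 * F)"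
    using norm_half_hyperbolic_diff_le[OF assms(1,3)] norm_Zm_perturbed_le[OF assms(2,4)]
      sh assms(3,4) \<open>0 \<le> E\<close>
    unfolding E_def F_def
    by (intro order_trans[OF opnorm_Xconj_diff_le_terms] add_mono mult_mono) simp_all
  also have "\<dots> = \<epsilon> * cmod a * E * (1/2 + 4 * F)"
    by (simp add: algebra_simps)
  also have "\<dots> \<le> \<epsilon> * cmod a * E * (5 * F)"
    using \<open>1 \<le> F\<close> \<open>0 \<le> E\<close> assms(3) by (intro mult_left_mono) simp_all
  finally show ?thesis
    by (simp add: E_def F_def mult_ac)
qed

lemma opnorm_Xconj_perturbed_le:
  assumes "cmod (a - a') \<le> \<epsilon> * cmod a" and "cmod (b - b') \<le> \<epsilon>" and "0 \<le> \<epsilon>" and "\<epsilon> \<le> 1/2"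
  shows "opnorm (Xconj a' b') \<le> exp (2 * (cmod a * exp (cmod b)))"
proof -
  have "cmod a' \<le> (1 + \<epsilon>) * cmod a"
    using assms(1) norm_triangle_ineq2[of a' a] by (simp add: algebra_simps norm_minus_commute)
  also have "\<dots> \<le> exp \<epsilon> * cmod a"
    by (intro mult_right_mono exp_ge_add_one_self) simp
  finally have "cmod a' \<le> exp \<epsilon> * cmod a" .
  moreover have "exp (cmod b') \<le> exp \<epsilon> * exp (cmod b)"
    using assms(2) norm_triangle_ineq2[of b' b] by (simp add: norm_minus_commute flip: exp_add)
  ultimately have "cmod a' * exp (cmod b') \<le> exp \<epsilon> * cmod a * (exp \<epsilon> * exp (cmod b))"
    by (intro mult_mono) simp_all
  also have "\<dots> = exp (2 * \<epsilon>) * (cmod a * exp (cmod b))"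
    by (simp add: mult_ac flip: exp_add)
  also have "\<dots> \<le> exp 1 * (cmod a * exp (cmod b))"
    using assms(4) by (intro mult_right_mono) simp_all
  finally have a'b': "cmod a' * exp (cmod b') \<le> exp 1 * (cmod a * exp (cmod b))" .
  have "sqrt 2 \<le> (142/100::real)"
    by (rule real_le_lsqrt) (simp_all add: power2_eq_square)
  then have "sqrt 2 * exp 1 \<le> (142/100) * (272/100::real)"
    using e_less_272 by (intro mult_mono) simp_all
  then have c: "sqrt 2 / 2 * exp 1 \<le> (2::real)"
    by simp
  have "sqrt 2 / 2 * (cmod a' * exp (cmod b')) \<le> sqrt 2 / 2 * (exp 1 * (cmod a * exp (cmod b)))"
    using a'b' by (intro mult_left_mono) simp_all
  also have "\<dots> \<le> 2 * (cmod a * exp (cmod b))"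
    unfolding mult.assoc[symmetric] using c by (intro mult_right_mono) simp_all
  finally show ?thesis
    using opnorm_Xconj_le[of a' b'] by (meson exp_le_cancel_iff order_trans)
qed

section \<open>Ordered products\<close>

lemma oprod_0 [simp]: "oprod f 0 = mat 1"
  by (simp add: oprod_def)

lemma oprod_Suc: "oprod f (Suc n) = oprod f n ** f (Suc n)"
proof -
  have foldr_mult: "foldr (\<lambda>i M. f i ** M) xs N = foldr (\<lambda>i M. f i ** M) xs (mat 1) ** N" for xs N
    by (induction xs) (simp_all add: matrix_mul_assoc)
  show ?thesis
    unfolding oprod_def by (simp add: foldr_mult[of _ "f (Suc n)"])
qed

lemma opnorm_oprod_le:
  assumes "\<And>i. i \<in> {1..n} \<Longrightarrow> opnorm (f i) \<le> C i"
  shows "opnorm (oprod f n) \<le> (\<Prod>i=1..n. C i)"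
  using assms
proof (induction n)
  case 0
  then show ?case
    by (simp add: opnorm_mat_1)
next
  case (Suc n)
  have C: "0 \<le> C i" if "i \<in> {1..Suc n}" for i
    using Suc.prems[OF that] opnorm_nonneg order_trans by blast
  have "opnorm (oprod f (Suc n)) \<le> opnorm (oprod f n) * opnorm (f (Suc n))"
    unfolding oprod_Suc by (rule opnorm_mult)
  also have "\<dots> \<le> (\<Prod>i=1..n. C i) * C (Suc n)"
    using Suc C opnorm_nonneg by (intro mult_mono prod_nonneg) auto
  finally show ?case
    by simp
qed

lemma opnorm_oprod_diff_le:
  assumes "\<And>i. i \<in> {1..n} \<Longrightarrow> opnorm (f i) \<le> C i"
    and "\<And>i. i \<in> {1..n} \<Longrightarrow> opnorm (g i) \<le> C i"
    and "\<And>i. i \<in> {1..n} \<Longrightarrow> 1 \<le> C i"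
    and "\<And>i. i \<in> {1..n} \<Longrightarrow> opnorm (f i - g i) \<le> d i"
  shows "opnorm (oprod f n - oprod g n) \<le> (\<Prod>i=1..n. C i) * (\<Sum>i=1..n. d i)"
  using assms
proof (induction n)
  case 0
  then show ?case
    by (simp add: opnorm_zero)
next
  case (Suc n)
  let ?P = "\<Prod>i=1..n. C i" and ?D = "\<Sum>i=1..n. d i" and ?f = "f (Suc n)" and ?g = "g (Suc n)"
  have IH: "opnorm (oprod f n - oprod g n) \<le> ?P * ?D"
    using Suc by simp
  have C0: "0 \<le> C i" and d0: "0 \<le> d i" if "i \<in> {1..Suc n}" for i
    using Suc.prems(3,4)[OF that] opnorm_nonneg[of "f i - g i"] by simp_all
  then have "0 \<le> ?P" "0 \<le> ?D" "0 \<le> d (Suc n)"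
    by (auto intro: prod_nonneg sum_nonneg)
  have "oprod f (Suc n) - oprod g (Suc n) = (oprod f n - oprod g n) ** ?f + oprod g n ** (?f - ?g)"
    unfolding oprod_Suc matrix_diff_ldistrib matrix_diff_rdistrib by simp
  then have "opnorm (oprod f (Suc n) - oprod g (Suc n))
      \<le> opnorm (oprod f n - oprod g n) * opnorm ?f + opnorm (oprod g n) * opnorm (?f - ?g)"
    by (auto intro: order_trans[OF opnorm_add] add_mono opnorm_mult)
  also have "\<dots> \<le> ?P * ?D * C (Suc n) + ?P * d (Suc n)"
    using IH opnorm_oprod_le[of n g C] Suc.prems \<open>0 \<le> ?P\<close> \<open>0 \<le> ?D\<close>
    by (intro add_mono mult_mono) (auto simp: opnorm_nonneg)
  also have "\<dots> \<le> ?P * C (Suc n) * (?D + d (Suc n))"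
  proof -
    have "?P * d (Suc n) \<le> ?P * C (Suc n) * d (Suc n)"
      using Suc.prems(3)[of "Suc n"] \<open>0 \<le> ?P\<close> \<open>0 \<le> d (Suc n)\<close>
      by (intro mult_right_mono) (simp_all add: mult_le_cancel_left1)
    then show ?thesis
      by (simp add: algebra_simps)
  qed
  finally show ?case
    by simp
qed

lemma opnorm_oprod_Xconj_diff_le:
  assumes a: "\<And>i. i \<in> {1..n} \<Longrightarrow> cmod (a i - a' i) \<le> \<epsilon> * cmod (a i)"
    and b: "\<And>i. i \<in> {1..n} \<Longrightarrow> cmod (b i - b' i) \<le> \<epsilon>"
    and "0 \<le> \<epsilon>" and "\<epsilon> \<le> 1/2"
  shows "opnorm (oprod (\<lambda>i. Xconj (a i) (b i)) n - oprod (\<lambda>i. Xconj (a' i) (b' i)) n)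
    \<le> exp (2 * (\<Sum>i=1..n. cmod (a i) * exp (cmod (b i))))
      * (5 * \<epsilon> * (\<Sum>i=1..n. cmod (a i) * exp (cmod (b i)) * exp (cmod (a i))))"
proof -
  define w where "w i = cmod (a i) * exp (cmod (b i))" for i
  have "opnorm (oprod (\<lambda>i. Xconj (a i) (b i)) n - oprod (\<lambda>i. Xconj (a' i) (b' i)) n)
      \<le> (\<Prod>i=1..n. exp (2 * w i)) * (\<Sum>i=1..n. 5 * \<epsilon> * w i * exp (cmod (a i)))"
  proof (rule opnorm_oprod_diff_le)
    fix i assume i: "i \<in> {1..n}"
    show "opnorm (Xconj (a i) (b i) - Xconj (a' i) (b' i)) \<le> 5 * \<epsilon> * w i * exp (cmod (a i))"
      unfolding w_def using a[OF i] b[OF i] assms(3,4) by (rule opnorm_Xconj_diff_le)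
    show "opnorm (Xconj (a' i) (b' i)) \<le> exp (2 * w i)"
      unfolding w_def using a[OF i] b[OF i] assms(3,4) by (rule opnorm_Xconj_perturbed_le)
    show "opnorm (Xconj (a i) (b i)) \<le> exp (2 * w i)"
      unfolding w_def by (rule opnorm_Xconj_perturbed_le[where \<epsilon> = 0]) simp_all
    show "1 \<le> exp (2 * w i)"
      by (simp add: w_def)
  qed
  also have "\<dots> = exp (2 * (\<Sum>i=1..n. w i)) * (5 * \<epsilon> * (\<Sum>i=1..n. w i * exp (cmod (a i))))"
    by (simp add: exp_sum sum_distrib_left mult_ac)
  finally show ?thesis
    unfolding w_def .
qed

theorem theoremA1:
  fixes a b a' b' :: "nat \<Rightarrow> complex" and n :: nat and A B \<epsilon> :: real
  assumes "A > 0" and "B > 0" and "\<epsilon> > 0"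
    and "\<epsilon> < min (1 / A) (1 / exp 1)"
    and "(\<Sum>i=1..n. cmod (a i) * exp (cmod (b i))) \<le> B"
    and "\<forall>i\<in>{1..n}. 2 * cmod (a i) * exp (cmod (b i) + 1) \<le> A"
    and "\<forall>i\<in>{1..n}. cmod (b i - b' i) < \<epsilon>"
    and "\<forall>i\<in>{1..n}. cmod (a i - a' i) < \<epsilon> * cmod (a i)"
  shows "opnorm (oprod (\<lambda>i. mflow Ym (b i) ** mflow Xm (a i) ** mflow Ym (- b i)) n
              - oprod (\<lambda>i. mflow Ym (b' i) ** mflow Xm (a' i) ** mflow Ym (- b' i)) n)
         \<le> 12 * exp (A + 2 * B) * B * \<epsilon>"
proof -
  let ?w = "\<lambda>i. cmod (a i) * exp (cmod (b i))"
  have "\<epsilon> * 2 \<le> \<epsilon> * exp 1"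
    using assms(3) exp_ge_add_one_self[of 1] by (intro mult_left_mono) simp_all
  then have "\<epsilon> \<le> 1/2"
    using assms(4) by (simp add: field_simps)
  then have "opnorm (oprod (\<lambda>i. Xconj (a i) (b i)) n - oprod (\<lambda>i. Xconj (a' i) (b' i)) n)
      \<le> exp (2 * (\<Sum>i=1..n. ?w i)) * (5 * \<epsilon> * (\<Sum>i=1..n. ?w i * exp (cmod (a i))))"
    using assms(3,7,8) by (intro opnorm_oprod_Xconj_diff_le) (simp_all add: less_imp_le)
  also have "\<dots> \<le> exp (2 * B) * (5 * \<epsilon> * (B * exp A))"
  proof -
    have aA: "cmod (a i) \<le> A" if "i \<in> {1..n}" for i
    proof -
      have "cmod (a i) * 1 \<le> 2 * cmod (a i) * exp (cmod (b i) + 1)"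
        by (intro mult_mono) simp_all
      then show ?thesis
        using bspec[OF assms(6) that] by linarith
    qed
    have "(\<Sum>i=1..n. ?w i * exp (cmod (a i))) \<le> (\<Sum>i=1..n. ?w i * exp A)"
      using aA by (intro sum_mono mult_left_mono) simp_all
    also have "\<dots> \<le> B * exp A"
      using assms(5) by (simp flip: sum_distrib_right)
    finally show ?thesis
      using assms(3,5) by (intro mult_mono mult_left_mono) (simp_all add: sum_nonneg)
  qed
  also have "\<dots> \<le> 12 * exp (A + 2 * B) * B * \<epsilon>"
    using assms(2,3) by (simp add: exp_add)
  finally show ?thesis
    unfolding Xconj_def .
qed

end
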